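(* Let $\mathcal{S}$ be a parametrized system and let $(V,E)$ be a finite directed graph whose nodes are parametrized formulas. For $\psi\in V$ let $\mathrm{In}(\psi)=\{\psi_i : (\psi_i,\psi)\in E\}$. Suppose: (G1) for every $\psi\in V$, $\Theta(\mathrm{Var}(\psi))\rightarrow\psi$ is valid in $T$; (G2) for every $\psi\in V$, every program location $\ell$ and every $k\in\mathrm{Var}(\psi)$, the formulas in $\mathrm{In}(\psi)$ support $\big(\psi\wedge\tau_\ell^{(k)}\rightarrow\psi'\big)$; (G3) for every $\psi\in V$ and every program location $\ell$, with $j$ a fresh $\mathsf{tid}$ variable not in $\mathrm{Var}(\psi)$, the formulas in $\mathrm{In}(\psi)$ support $\big(\psi\wedge\bigwedge_{k\in\mathrm{Var}(\psi)} j\neq k\wedge\tau_\ell^{(j)}\rightarrow\psi'\big)$. Then $\mathcal{S}\vDash\Box\psi$ for all $\psi\in V$.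
   Context: A parametrized program consists of global variables $V_{global}$, local variables $V_{local}$ (including a program counter $pc$), a global initial condition $\Theta_g$, a local initial condition $\Theta_l$, and transition relations $\tau_\ell$, one per program location $\ell$. For each $M\geq1$, with $[M]=\{0,\dots,M-1\}$, the instance $\mathcal{S}[M]$ has variables $V_{global}\cup\{v[a]:v\in V_{local},a\in[M]\}$, initial condition $\Theta_g\wedge\bigwedge_{a\in[M]}\Theta_l[a]$ and transitions $\tau_\ell[a]$ (obtained by replacing $v$ by $v[a]$, $v'$ by $v'[a]$, other threads' locals unchanged), with interleaving semantics. Thread identifiers form a sort $\mathsf{tid}$ with only $=,\neq$; each local variable $v$ is represented by a global array $a_v:\mathsf{tid}\to t$, read as $v(k)$. $T$ combines the program's data theory, the $\mathsf{tid}$ theory and the theory of arrays. A parametrized formula is a $T$-formula over global variables, the arrays, and free $\mathsf{tid}$ variables $\mathrm{Var}(\psi)$; $\psi'$ denotes $\psi$ over primed variables. $\Theta(X)=\Theta_g\wedge\bigwedge_{k\in X}\Theta_l(k)$ with $\Theta_l(k)$ replacing $v$ by $v(k)$. $\tau_\ell^{(k)}$ is $\tau_\ell$ with $v$ replaced by $v(k)$, $v'$ by $v'(k)$, and all other array positions preserved. Support: given parametrized formulas $\psi_1,\dots,\psi_m$ and a parametrized formula $A\rightarrow B$ with $\mathrm{Var}(A\rightarrow B)=X$, the $\psi_i$ support $A\rightarrow B$ if for some set $S_i$ of partial substitutions $\mathrm{Var}(\psi_i)\rightharpoonup X$ the formula $\big(\bigwedge_i\bigwedge_{\sigma\in S_i}\psi_i\sigma\wedge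 A\big)\rightarrow B$ is valid in $T$. A concretization $\alpha:\mathrm{Var}(\psi)\to[N]$ maps $\psi$ to the state predicate $\alpha(\psi)$ of $\mathcal{S}[N]$ replacing $v(k)$ by $v[\alpha(k)]$. $\mathcal{S}\vDash\Box\psi$ means that for every $N$ and every concretization $\alpha:\mathrm{Var}(\psi)\to[N]$, all states of all runs of $\mathcal{S}[N]$ satisfy $\alpha(\psi)$. *)

theory Defs
  imports Main
begin

text \<open>
Program: global state type 'g, local state type 'l
(including the program counter), locations 'loc.  Thread identifiers are
interpreted in nat; tid variables are nat as well.  A parametrized formula is a pair
(Var, semantics) where the semantics reads a global state, the local-variable
arrays (tid -> local state) and a valuation of the tid variables.
\<close>

type_synonym ('g, 'l) pformula =
  "nat set \<times> ('g \<Rightarrow> (nat \<Rightarrow> 'l) \<Rightarrow> (nat \<Rightarrow> nat) \<Rightarrow> bool)"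

definition pvars :: "('g, 'l) pformula \<Rightarrow> nat set" where
  "pvars \<psi> = fst \<psi>"

definition peval :: "('g, 'l) pformula \<Rightarrow> 'g \<Rightarrow> (nat \<Rightarrow> 'l) \<Rightarrow> (nat \<Rightarrow> nat) \<Rightarrow> bool" where
  "peval \<psi> = snd \<psi>"

text \<open>Well-formedness: a (tid-quantifier-free) T-formula over the globals, the arrays
indexed by its free tid variables, and tid (dis)equalities between its free variables.\<close>
definition wf_pformula :: "('g, 'l) pformula \<Rightarrow> bool" where
  "wf_pformula \<psi> \<longleftrightarrow> finite (pvars \<psi>) \<and>
     (\<forall>g A \<rho> A2 \<rho>2.
        (\<forall>k\<in>pvars \<psi>. A (\<rho> k) = A2 (\<rho>2 k)) \<and>
        (\<forall>k\<in>pvars \<psi>. \<forall>k'\<in>pvars \<psi>. (\<rho> k = \<rho> k') = (\<rho>2 k = \<rho>2 k'))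
        \<longrightarrow> peval \<psi> g A \<rho> = peval \<psi> g A2 \<rho>2)"

definition theta :: "('g \<Rightarrow> bool) \<Rightarrow> ('l \<Rightarrow> bool) \<Rightarrow> nat set \<Rightarrow> 'g \<Rightarrow> (nat \<Rightarrow> 'l) \<Rightarrow> (nat \<Rightarrow> nat) \<Rightarrow> bool" where
  "theta \<Theta>g \<Theta>l X g A \<rho> \<longleftrightarrow> \<Theta>g g \<and> (\<forall>k\<in>X. \<Theta>l (A (\<rho> k)))"

definition tau_at :: "('loc \<Rightarrow> 'g \<Rightarrow> 'l \<Rightarrow> 'g \<Rightarrow> 'l \<Rightarrow> bool) \<Rightarrow> 'loc \<Rightarrow> nat \<Rightarrow>
    'g \<Rightarrow> (nat \<Rightarrow> 'l) \<Rightarrow> 'g \<Rightarrow> (nat \<Rightarrow> 'l) \<Rightarrow> (nat \<Rightarrow> nat) \<Rightarrow> bool" where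
  "tau_at \<tau> l k g A g' A' \<rho> \<longleftrightarrow>
     \<tau> l g (A (\<rho> k)) g' (A' (\<rho> k)) \<and> (\<forall>t. t \<noteq> \<rho> k \<longrightarrow> A' t = A t)"

text \<open>Valuation of a partially substituted formula psi sigma: substituted variables take
the value of their image; unsubstituted variables are (renamed apart, hence) fresh and
take values from mu.\<close>
definition subst_val :: "(nat \<rightharpoonup> nat) \<Rightarrow> (nat \<Rightarrow> nat) \<Rightarrow> (nat \<Rightarrow> nat) \<Rightarrow> nat \<Rightarrow> nat" where
  "subst_val \<sigma> \<rho> \<mu> v = (case \<sigma> v of Some x \<Rightarrow> \<rho> x | None \<Rightarrow> \<mu> v)"

text \<open>The formulas in Psi support Prem --> Concl (whose free tid variables are X).
Validity in T = truth for all global states, arrays, primed copies and tid valuations.\<close>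
definition supports :: "('g, 'l) pformula set \<Rightarrow> nat set \<Rightarrow>
    ('g \<Rightarrow> (nat \<Rightarrow> 'l) \<Rightarrow> 'g \<Rightarrow> (nat \<Rightarrow> 'l) \<Rightarrow> (nat \<Rightarrow> nat) \<Rightarrow> bool) \<Rightarrow>
    ('g \<Rightarrow> (nat \<Rightarrow> 'l) \<Rightarrow> 'g \<Rightarrow> (nat \<Rightarrow> 'l) \<Rightarrow> (nat \<Rightarrow> nat) \<Rightarrow> bool) \<Rightarrow> bool" where
  "supports \<Psi> X Prem Concl \<longleftrightarrow>
     (\<exists>S. (\<forall>\<psi>\<in>\<Psi>. \<forall>\<sigma>\<in>S \<psi>. dom \<sigma> \<subseteq> pvars \<psi> \<and> ran \<sigma> \<subseteq> X) \<and>
          (\<forall>g A g' A' \<rho>.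
             (\<forall>\<psi>\<in>\<Psi>. \<forall>\<sigma>\<in>S \<psi>. \<exists>\<mu>. peval \<psi> g A (subst_val \<sigma> \<rho> \<mu>)) \<and> Prem g A g' A' \<rho>
             \<longrightarrow> Concl g A g' A' \<rho>))"

definition In_edges :: "(('g, 'l) pformula \<times> ('g, 'l) pformula) set \<Rightarrow> ('g, 'l) pformula \<Rightarrow> ('g, 'l) pformula set" where
  "In_edges E \<psi> = {\<psi>i. (\<psi>i, \<psi>) \<in> E}"

text \<open>Reachable states of the instance S[N]: a state is (g, L) with L a (i) for threads a < N
(positions >= N are irrelevant and never read).\<close>
inductive_set reach :: "('g \<Rightarrow> bool) \<Rightarrow> ('l \<Rightarrow> bool) \<Rightarrow> ('loc \<Rightarrow> 'g \<Rightarrow> 'l \<Rightarrow> 'g \<Rightarrow> 'l \<Rightarrow> bool) \<Rightarrow>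
    nat \<Rightarrow> ('g \<times> (nat \<Rightarrow> 'l)) set"
  for \<Theta>g \<Theta>l \<tau> N where
  init: "\<Theta>g g \<Longrightarrow> (\<forall>a<N. \<Theta>l (L a)) \<Longrightarrow> (g, L) \<in> reach \<Theta>g \<Theta>l \<tau> N"
| step: "(g, L) \<in> reach \<Theta>g \<Theta>l \<tau> N \<Longrightarrow> a < N \<Longrightarrow> \<tau> l g (L a) g' l' \<Longrightarrow>
         (g', L(a := l')) \<in> reach \<Theta>g \<Theta>l \<tau> N"

definition always :: "('g \<Rightarrow> bool) \<Rightarrow> ('l \<Rightarrow> bool) \<Rightarrow> ('loc \<Rightarrow> 'g \<Rightarrow> 'l \<Rightarrow> 'g \<Rightarrow> 'l \<Rightarrow> bool) \<Rightarrow>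
    ('g, 'l) pformula \<Rightarrow> bool" where
  "always \<Theta>g \<Theta>l \<tau> \<psi> \<longleftrightarrow>
     (\<forall>N\<ge>1. \<forall>\<alpha>. (\<forall>k\<in>pvars \<psi>. \<alpha> k < N) \<longrightarrow>
        (\<forall>g L. (g, L) \<in> reach \<Theta>g \<Theta>l \<tau> N \<longrightarrow> peval \<psi> g L \<alpha>))"

end

theory Submission
  imports Defs
begin

text \<open>
All nodes of the graph are proved invariant simultaneously, by induction on the length of a
run of \<open>S[N]\<close>. A step of thread \<open>a\<close> either moves a thread named by one of the
variables of \<open>\<psi>\<close> (use (G2)) or a thread distinct from all of them, which a fresh
variable \<open>j\<close> can name (use (G3)). In both cases the induction hypothesis for the
predecessors \<open>In(\<psi>)\<close>, instantiated at every substitution instance, discharges the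
support.
\<close>

definition holds_in_instance :: "nat \<Rightarrow> ('g, 'l) pformula \<Rightarrow> 'g \<Rightarrow> (nat \<Rightarrow> 'l) \<Rightarrow> bool" where
  "holds_in_instance N \<psi> g L \<longleftrightarrow> (\<forall>\<alpha>. (\<forall>k\<in>pvars \<psi>. \<alpha> k < N) \<longrightarrow> peval \<psi> g L \<alpha>)"

lemma wf_pformula_finite_pvars: "wf_pformula \<psi> \<Longrightarrow> finite (pvars \<psi>)"
  unfolding wf_pformula_def by blast

lemma peval_cong_valuation:
  assumes "wf_pformula \<psi>" and "\<forall>k\<in>pvars \<psi>. \<rho> k = \<rho>' k"
  shows "peval \<psi> g A \<rho> = peval \<psi> g A \<rho>'"
proof -
  have "(\<forall>k\<in>pvars \<psi>. A (\<rho> k) = A (\<rho>' k)) \<and>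
        (\<forall>k\<in>pvars \<psi>. \<forall>k'\<in>pvars \<psi>. (\<rho> k = \<rho> k') = (\<rho>' k = \<rho>' k'))"
    using assms(2) by simp
  then show ?thesis using assms(1) unfolding wf_pformula_def by blast
qed

lemma subst_val_bounded:
  assumes "ran \<sigma> \<subseteq> X" and "\<forall>x\<in>X. \<rho> x < N" and "0 < N"
  shows "subst_val \<sigma> \<rho> (\<lambda>_. 0) k < N"
proof (cases "\<sigma> k")
  case (Some x)
  then have "x \<in> X" using assms(1) ranI by fast
  then show ?thesis using Some assms(2) by (simp add: subst_val_def)
qed (use assms(3) in \<open>simp add: subst_val_def\<close>)

text \<open>Supporting formulas that hold in a state of \<open>S[N]\<close> justify the supported
implication for every valuation of its variables into \<open>[N]\<close>: each substitution instance
\<open>\<psi>\<^sub>i\<sigma>\<close> is itself a concretization once its unsubstituted variables are sent to thread 0.\<close>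
lemma supports_in_instance:
  assumes "supports \<Psi> X Prem Concl"
    and "\<forall>\<psi>\<in>\<Psi>. holds_in_instance N \<psi> g A"
    and "0 < N" and "\<forall>x\<in>X. \<rho> x < N" and "Prem g A g' A' \<rho>"
  shows "Concl g A g' A' \<rho>"
proof -
  obtain S where S_dom_ran: "\<forall>\<psi>\<in>\<Psi>. \<forall>\<sigma>\<in>S \<psi>. dom \<sigma> \<subseteq> pvars \<psi> \<and> ran \<sigma> \<subseteq> X"
    and S_valid: "\<forall>g A g' A' \<rho>.
             (\<forall>\<psi>\<in>\<Psi>. \<forall>\<sigma>\<in>S \<psi>. \<exists>\<mu>. peval \<psi> g A (subst_val \<sigma> \<rho> \<mu>)) \<and> Prem g A g' A' \<rho>
             \<longrightarrow> Concl g A g' A' \<rho>"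
    using assms(1) unfolding supports_def by (elim exE conjE)
  have "\<forall>\<psi>\<in>\<Psi>. \<forall>\<sigma>\<in>S \<psi>. \<exists>\<mu>. peval \<psi> g A (subst_val \<sigma> \<rho> \<mu>)"
  proof (intro ballI exI)
    fix \<psi> \<sigma> assume \<psi>: "\<psi> \<in> \<Psi>" and \<sigma>: "\<sigma> \<in> S \<psi>"
    have "ran \<sigma> \<subseteq> X" using S_dom_ran \<psi> \<sigma> by blast
    then have "\<forall>k\<in>pvars \<psi>. subst_val \<sigma> \<rho> (\<lambda>_. 0) k < N"
      using subst_val_bounded assms(3,4) by blast
    then show "peval \<psi> g A (subst_val \<sigma> \<rho> (\<lambda>_. 0))"
      using assms(2) \<psi> unfolding holds_in_instance_def by blast
  qed
  then show ?thesis using S_valid assms(5) by blast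
qed

lemma holds_after_own_step:
  assumes "supports \<Psi> (pvars \<psi>)
             (\<lambda>g A g' A' \<rho>. peval \<psi> g A \<rho> \<and> tau_at \<tau> l k g A g' A' \<rho>)
             (\<lambda>g A g' A' \<rho>. peval \<psi> g' A' \<rho>)"
    and "\<forall>\<phi>\<in>\<Psi>. holds_in_instance N \<phi> g L"
    and "peval \<psi> g L \<alpha>" and "\<forall>k\<in>pvars \<psi>. \<alpha> k < N"
    and "\<alpha> k = a" and "a < N" and "\<tau> l g (L a) g' l'"
  shows "peval \<psi> g' (L(a := l')) \<alpha>"
proof -
  have "tau_at \<tau> l k g L g' (L(a := l')) \<alpha>"
    using assms(5,7) unfolding tau_at_def by simp
  then show ?thesis
    using supports_in_instance[OF assms(1,2), of \<alpha> g' "L(a := l')"] assms(3,4,6) by simp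
qed

lemma holds_after_foreign_step:
  assumes "supports \<Psi> (insert j (pvars \<psi>))
             (\<lambda>g A g' A' \<rho>. peval \<psi> g A \<rho> \<and> (\<forall>k\<in>pvars \<psi>. \<rho> j \<noteq> \<rho> k)
                             \<and> tau_at \<tau> l j g A g' A' \<rho>)
             (\<lambda>g A g' A' \<rho>. peval \<psi> g' A' \<rho>)"
    and "\<forall>\<phi>\<in>\<Psi>. holds_in_instance N \<phi> g L"
    and "wf_pformula \<psi>" and "j \<notin> pvars \<psi>"
    and "peval \<psi> g L \<alpha>" and "\<forall>k\<in>pvars \<psi>. \<alpha> k < N"
    and "\<forall>k\<in>pvars \<psi>. \<alpha> k \<noteq> a" and "a < N" and "\<tau> l g (L a) g' l'"
  shows "peval \<psi> g' (L(a := l')) \<alpha>"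
proof -
  define \<rho> where "\<rho> = \<alpha>(j := a)"
  have agree: "\<forall>k\<in>pvars \<psi>. \<rho> k = \<alpha> k"
    using assms(4) unfolding \<rho>_def by auto
  have "peval \<psi> g L \<rho>"
    using assms(5) peval_cong_valuation[OF assms(3) agree] by simp
  moreover have "\<forall>k\<in>pvars \<psi>. \<rho> j \<noteq> \<rho> k"
    using assms(7) agree unfolding \<rho>_def by auto
  moreover have "tau_at \<tau> l j g L g' (L(a := l')) \<rho>"
    using assms(9) unfolding tau_at_def \<rho>_def by simp
  moreover have "\<forall>x\<in>insert j (pvars \<psi>). \<rho> x < N"
    using assms(6,8) agree unfolding \<rho>_def by auto
  ultimately have "peval \<psi> g' (L(a := l')) \<rho>"
    using supports_in_instance[OF assms(1,2), of \<rho> g' "L(a := l')"] assms(8) by simp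
  then show ?thesis
    using peval_cong_valuation[OF assms(3) agree] by simp
qed

lemma holds_in_instance_step:
  assumes wf: "wf_pformula \<psi>"
    and own: "\<forall>l. \<forall>k\<in>pvars \<psi>.
               supports \<Psi> (pvars \<psi>)
                 (\<lambda>g A g' A' \<rho>. peval \<psi> g A \<rho> \<and> tau_at \<tau> l k g A g' A' \<rho>)
                 (\<lambda>g A g' A' \<rho>. peval \<psi> g' A' \<rho>)"
    and foreign: "\<forall>l. \<forall>j. j \<notin> pvars \<psi> \<longrightarrow>
               supports \<Psi> (insert j (pvars \<psi>))
                 (\<lambda>g A g' A' \<rho>. peval \<psi> g A \<rho> \<and> (\<forall>k\<in>pvars \<psi>. \<rho> j \<noteq> \<rho> k)
                                 \<and> tau_at \<tau> l j g A g' A' \<rho>)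
                 (\<lambda>g A g' A' \<rho>. peval \<psi> g' A' \<rho>)"
    and pred: "\<forall>\<phi>\<in>\<Psi>. holds_in_instance N \<phi> g L"
    and \<psi>: "holds_in_instance N \<psi> g L"
    and step: "a < N" "\<tau> l g (L a) g' l'"
  shows "holds_in_instance N \<psi> g' (L(a := l'))"
  unfolding holds_in_instance_def
proof (intro allI impI)
  fix \<alpha> assume bd: "\<forall>k\<in>pvars \<psi>. \<alpha> k < N"
  have before: "peval \<psi> g L \<alpha>" using \<psi> bd unfolding holds_in_instance_def by blast
  show "peval \<psi> g' (L(a := l')) \<alpha>"
  proof (cases "\<exists>k\<in>pvars \<psi>. \<alpha> k = a")
    case True
    then obtain k where k: "k \<in> pvars \<psi>" "\<alpha> k = a" by blast
    from holds_after_own_step[OF own[rule_format, OF k(1)] pred before bd k(2) step]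
    show ?thesis .
  next
    case False
    obtain j where j: "j \<notin> pvars \<psi>"
      using ex_new_if_finite[OF infinite_UNIV_nat wf_pformula_finite_pvars[OF wf]] by blast
    have "\<forall>k\<in>pvars \<psi>. \<alpha> k \<noteq> a" using False by blast
    from holds_after_foreign_step[OF foreign[rule_format, OF j] pred wf j before bd this step]
    show ?thesis .
  qed
qed

theorem theorem3:
  fixes \<Theta>g :: "'g \<Rightarrow> bool" and \<Theta>l :: "'l \<Rightarrow> bool"
    and \<tau> :: "'loc \<Rightarrow> 'g \<Rightarrow> 'l \<Rightarrow> 'g \<Rightarrow> 'l \<Rightarrow> bool"
    and V :: "('g, 'l) pformula set"
    and E :: "(('g, 'l) pformula \<times> ('g, 'l) pformula) set"
  assumes finV: "finite V"
    and EV: "E \<subseteq> V \<times> V"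
    and wf: "\<forall>\<psi>\<in>V. wf_pformula \<psi>"
    and G1: "\<forall>\<psi>\<in>V. \<forall>g A \<rho>. theta \<Theta>g \<Theta>l (pvars \<psi>) g A \<rho> \<longrightarrow> peval \<psi> g A \<rho>"
    and G2: "\<forall>\<psi>\<in>V. \<forall>l. \<forall>k\<in>pvars \<psi>.
               supports (In_edges E \<psi>) (pvars \<psi>)
                 (\<lambda>g A g' A' \<rho>. peval \<psi> g A \<rho> \<and> tau_at \<tau> l k g A g' A' \<rho>)
                 (\<lambda>g A g' A' \<rho>. peval \<psi> g' A' \<rho>)"
    and G3: "\<forall>\<psi>\<in>V. \<forall>l. \<forall>j. j \<notin> pvars \<psi> \<longrightarrow>
               supports (In_edges E \<psi>) (insert j (pvars \<psi>))
                 (\<lambda>g A g' A' \<rho>. peval \<psi> g A \<rho> \<and> (\<forall>k\<in>pvars \<psi>. \<rho> j \<noteq> \<rho> k)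
                                 \<and> tau_at \<tau> l j g A g' A' \<rho>)
                 (\<lambda>g A g' A' \<rho>. peval \<psi> g' A' \<rho>)"
  shows "\<forall>\<psi>\<in>V. always \<Theta>g \<Theta>l \<tau> \<psi>"
proof -
  have invariant: "\<forall>\<psi>\<in>V. holds_in_instance N \<psi> g L"
    if "(g, L) \<in> reach \<Theta>g \<Theta>l \<tau> N" for N g L
    using that
  proof (induction rule: reach.induct)
    case (init g L)
    then show ?case using G1 unfolding holds_in_instance_def theta_def by blast
  next
    case (step g L a l g' l')
    show ?case
    proof
      fix \<psi> assume \<psi>: "\<psi> \<in> V"
      have "\<forall>\<phi>\<in>In_edges E \<psi>. holds_in_instance N \<phi> g L"
        using step.IH EV unfolding In_edges_def by blast
      from holds_in_instance_step[where L = L and a = a,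
             OF bspec[OF wf \<psi>] bspec[OF G2 \<psi>] bspec[OF G3 \<psi>] this bspec[OF step.IH \<psi>]
                step.hyps(2,3)]
      show "holds_in_instance N \<psi> g' (L(a := l'))" .
    qed
  qed
  show ?thesis
  proof (unfold always_def, intro ballI allI impI)
    fix \<psi> N \<alpha> g L
    assume "\<psi> \<in> V" "\<forall>k\<in>pvars \<psi>. \<alpha> k < N" "(g, L) \<in> reach \<Theta>g \<Theta>l \<tau> N"
    then show "peval \<psi> g L \<alpha>"
      using invariant[of g L N] unfolding holds_in_instance_def by blast
  qed
qed

end
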